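(* If $\mathcal{P}$ and $\mathcal{Q}$ are locally finite posets, then $J_\mathcal{P}\times J_\mathcal{Q}=J_{\mathcal{P}\times\mathcal{Q}}$, i.e. for all $(x_1,y_1,z_1)\in\mathcal{F}l^3(\mathcal{P})$ and $(x_2,y_2,z_2)\in\mathcal{F}l^3(\mathcal{Q})$, $$J_{\mathcal{P}\times\mathcal{Q}}\big((x_1,x_2),(y_1,y_2),(z_1,z_2)\big)=J_\mathcal{P}(x_1,y_1,z_1)\,J_\mathcal{Q}(x_2,y_2,z_2).$$
   Context: $\mathcal{P}\times\mathcal{Q}$ has the product order. For a locally finite poset $\mathcal{R}$, $\mathcal{F}l^3(\mathcal{R})=\{(x,y,z)\in\mathcal{R}^3:x\le y\le z\}$, $\delta_3(x,y,z)=1$ if $x=y=z$ and $0$ otherwise, and $J_\mathcal{R}:\mathcal{F}l^3(\mathcal{R})\to\mathbb{Z}$ is the unique function with $\sum_{x\le a\le y\le b\le z}J_\mathcal{R}(a,y,b)=\delta_3(x,y,z)$ for all $(x,y,z)\in\mathcal{F}l^3(\mathcal{R})$ (sum over $a,b\in\mathcal{R}$). *)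

theory Defs
  imports Main "HOL-Library.Product_Order"
begin

text \<open>A poset is modelled as a type of class order; the product poset is the
  product type with the componentwise order from HOL-Library.Product_Order.\<close>

definition locally_finite :: "'a::order itself \<Rightarrow> bool" where
  "locally_finite _ \<longleftrightarrow> (\<forall>x y :: 'a. finite {x..y})"

definition Fl3 :: "('a::order \<times> 'a \<times> 'a) set" where
  "Fl3 = {(x, y, z). x \<le> y \<and> y \<le> z}"

definition delta3 :: "'a \<Rightarrow> 'a \<Rightarrow> 'a \<Rightarrow> int" where
  "delta3 x y z = (if x = y \<and> y = z then 1 else 0)"

definition J :: "'a::order \<Rightarrow> 'a \<Rightarrow> 'a \<Rightarrow> int" where
  "J = (THE f. (\<forall>a y b. (a, y, b) \<notin> Fl3 \<longrightarrow> f a y b = 0) \<and>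
              (\<forall>x y z. (x, y, z) \<in> Fl3 \<longrightarrow>
                 (\<Sum>a\<in>{x..y}. \<Sum>b\<in>{y..z}. f a y b) = delta3 x y z))"

end

theory Submission
  imports Defs
begin

text \<open>In a locally finite poset the defining identity of J is triangular: isolating the
  term a = x, b = z gives J(x,y,z) = delta3(x,y,z) minus a sum of values of J on triples
  whose two intervals are smaller in total size, so the identity has exactly one solution.
  Intervals of P \<times> Q are products of intervals, hence for the product J_P \<times> J_Q the double
  sum of the product poset factors into the two defining sums of P and Q; as delta3 is
  multiplicative, J_P \<times> J_Q solves the identity of P \<times> Q and is therefore J_{P \<times> Q}.\<close>

lemma locally_finite_Icc:
  assumes "locally_finite TYPE('a::order)"
  shows "finite {x..y::'a}"
  using assms unfolding locally_finite_def by blast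

lemma locally_finite_prod:
  assumes "locally_finite TYPE('a::order)" and "locally_finite TYPE('b::order)"
  shows "locally_finite TYPE('a \<times> 'b)"
  using assms by (simp add: locally_finite_def atLeastAtMost_prod_eq)

lemma card_Icc_Icc_less:
  fixes x a y b z :: "'a::order"
  assumes "finite {x..y}" and "finite {y..z}"
    and "a \<in> {x..y}" and "b \<in> {y..z}" and "(a, b) \<noteq> (x, z)"
  shows "card {a..y} + card {y..b} < card {x..y} + card {y..z}"
proof -
  have sub: "{a..y} \<subseteq> {x..y}" "{y..b} \<subseteq> {y..z}"
    using assms(3,4) by auto
  have "{a..y} \<subset> {x..y} \<or> {y..b} \<subset> {y..z}"
    using assms(3-5) sub by auto
  then have "card {a..y} < card {x..y} \<or> card {y..b} < card {y..z}"
    using assms(1,2) by (meson psubset_card_mono)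
  moreover have "card {a..y} \<le> card {x..y}" "card {y..b} \<le> card {y..z}"
    using assms(1,2) sub by (simp_all add: card_mono)
  ultimately show ?thesis
    by linarith
qed

text \<open>The finiteness guard makes the recursion terminate on every order, not only on
  locally finite ones.\<close>
function J_rec :: "'a::order \<Rightarrow> 'a \<Rightarrow> 'a \<Rightarrow> int" where
  "J_rec x y z =
     (if x \<le> y \<and> y \<le> z \<and> finite {x..y} \<and> finite {y..z}
      then delta3 x y z - (\<Sum>(a, b) \<in> {x..y} \<times> {y..z} - {(x, z)}. J_rec a y b)
      else 0)"
  by auto
termination
  by (relation "measure (\<lambda>(x, y, z). card {x..y} + card {y..z})")
     (auto intro: card_Icc_Icc_less)

declare J_rec.simps [simp del]

definition J_spec :: "('a::order \<Rightarrow> 'a \<Rightarrow> 'a \<Rightarrow> int) \<Rightarrow> bool" where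
  "J_spec f \<longleftrightarrow> (\<forall>a y b. (a, y, b) \<notin> Fl3 \<longrightarrow> f a y b = 0) \<and>
     (\<forall>x y z. (x, y, z) \<in> Fl3 \<longrightarrow> (\<Sum>a\<in>{x..y}. \<Sum>b\<in>{y..z}. f a y b) = delta3 x y z)"

lemma J_eq_The_J_spec: "J = (THE f. J_spec f)"
  unfolding J_def J_spec_def ..

lemma sum_sum_remove:
  assumes "finite A" and "finite B" and "a \<in> A" and "b \<in> B"
  shows "(\<Sum>x\<in>A. \<Sum>y\<in>B. h x y) = h a b + (\<Sum>(x, y) \<in> A \<times> B - {(a, b)}. h x y)"
proof -
  have "(a, b) \<in> A \<times> B" and "finite (A \<times> B)"
    using assms by auto
  then show ?thesis
    by (simp only: sum.cartesian_product sum.remove) simp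
qed

lemma J_rec_eq:
  assumes "locally_finite TYPE('a::order)"
  shows "J_rec x y (z::'a) =
    (if (x, y, z) \<in> Fl3
     then delta3 x y z - (\<Sum>(a, b) \<in> {x..y} \<times> {y..z} - {(x, z)}. J_rec a y b)
     else 0)"
  using assms by (subst J_rec.simps) (simp add: Fl3_def locally_finite_Icc)

lemma J_spec_J_rec:
  assumes "locally_finite TYPE('a::order)"
  shows "J_spec (J_rec :: 'a \<Rightarrow> 'a \<Rightarrow> 'a \<Rightarrow> int)"
  unfolding J_spec_def
proof (intro conjI allI impI)
  fix a y b :: 'a
  assume "(a, y, b) \<notin> Fl3"
  then show "J_rec a y b = 0"
    using J_rec_eq[OF assms] by simp
next
  fix x y z :: 'a
  assume F: "(x, y, z) \<in> Fl3"
  then have "(\<Sum>a\<in>{x..y}. \<Sum>b\<in>{y..z}. J_rec a y b)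
      = J_rec x y z + (\<Sum>(a, b) \<in> {x..y} \<times> {y..z} - {(x, z)}. J_rec a y b)"
    by (intro sum_sum_remove) (auto simp: Fl3_def locally_finite_Icc[OF assms])
  also have "\<dots> = delta3 x y z"
    using F by (subst J_rec_eq[OF assms]) simp
  finally show "(\<Sum>a\<in>{x..y}. \<Sum>b\<in>{y..z}. J_rec a y b) = delta3 x y z" .
qed

lemma J_spec_imp_eq_J_rec:
  assumes lf: "locally_finite TYPE('a::order)" and f: "J_spec (f :: 'a \<Rightarrow> 'a \<Rightarrow> 'a \<Rightarrow> int)"
  shows "f = J_rec"
proof (intro ext)
  fix x y z :: 'a
  show "f x y z = J_rec x y z"
  proof (induction x y z rule: J_rec.induct)
    case (1 x y z)
    show ?case
    proof (cases "(x, y, z) \<in> Fl3")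
      case True
      let ?R = "{x..y} \<times> {y..z} - {(x, z)}"
      have "delta3 x y z = (\<Sum>a\<in>{x..y}. \<Sum>b\<in>{y..z}. f a y b)"
        using f True by (simp add: J_spec_def)
      also have "\<dots> = f x y z + (\<Sum>(a, b) \<in> ?R. f a y b)"
        using True by (intro sum_sum_remove) (auto simp: Fl3_def locally_finite_Icc[OF lf])
      also have "(\<Sum>(a, b) \<in> ?R. f a y b) = (\<Sum>(a, b) \<in> ?R. J_rec a y b)"
        using True "1" by (intro sum.cong) (auto simp: Fl3_def locally_finite_Icc[OF lf])
      finally show ?thesis
        using True by (subst J_rec_eq[OF lf]) simp
    next
      case False
      then show ?thesis
        using f by (subst J_rec_eq[OF lf]) (simp add: J_spec_def)
    qed
  qed
qed

lemma J_eq_J_rec: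
  assumes "locally_finite TYPE('a::order)"
  shows "(J :: 'a \<Rightarrow> 'a \<Rightarrow> 'a \<Rightarrow> int) = J_rec"
  unfolding J_eq_The_J_spec
  using J_spec_J_rec[OF assms] J_spec_imp_eq_J_rec[OF assms] by (rule the_equality)

lemma J_spec_J:
  assumes "locally_finite TYPE('a::order)"
  shows "J_spec (J :: 'a \<Rightarrow> 'a \<Rightarrow> 'a \<Rightarrow> int)"
  using J_spec_J_rec[OF assms] by (simp add: J_eq_J_rec[OF assms])

lemma Fl3_prod_iff:
  "((a, y, b) \<in> Fl3) \<longleftrightarrow> (fst a, fst y, fst b) \<in> Fl3 \<and> (snd a, snd y, snd b) \<in> Fl3"
  by (auto simp: Fl3_def less_eq_prod_def)

lemma delta3_prod: "delta3 x y z = delta3 (fst x) (fst y) (fst z) * delta3 (snd x) (snd y) (snd z)"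
  by (auto simp: delta3_def prod_eq_iff)

lemma sum_atLeastAtMost_prod:
  "(\<Sum>a\<in>{u..v}. h a) = (\<Sum>a1\<in>{fst u..fst v}. \<Sum>a2\<in>{snd u..snd v}. h (a1, a2))"
  by (simp add: atLeastAtMost_prod_eq sum.cartesian_product)

lemma J_spec_prod:
  fixes f :: "'a::order \<Rightarrow> 'a \<Rightarrow> 'a \<Rightarrow> int" and g :: "'b::order \<Rightarrow> 'b \<Rightarrow> 'b \<Rightarrow> int"
  assumes f: "J_spec f" and g: "J_spec g"
  shows "J_spec (\<lambda>a y b. f (fst a) (fst y) (fst b) * g (snd a) (snd y) (snd b))"
  unfolding J_spec_def
proof (intro conjI allI impI)
  fix a y b :: "'a \<times> 'b"
  assume "(a, y, b) \<notin> Fl3"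
  then have "f (fst a) (fst y) (fst b) = 0 \<or> g (snd a) (snd y) (snd b) = 0"
    using f g unfolding J_spec_def Fl3_prod_iff by blast
  then show "f (fst a) (fst y) (fst b) * g (snd a) (snd y) (snd b) = 0"
    by auto
next
  fix x y z :: "'a \<times> 'b"
  assume "(x, y, z) \<in> Fl3"
  then have F1: "(fst x, fst y, fst z) \<in> Fl3" and F2: "(snd x, snd y, snd z) \<in> Fl3"
    by (simp_all add: Fl3_prod_iff)
  have "(\<Sum>a\<in>{x..y}. \<Sum>b\<in>{y..z}. f (fst a) (fst y) (fst b) * g (snd a) (snd y) (snd b))
     = (\<Sum>a1\<in>{fst x..fst y}. \<Sum>a2\<in>{snd x..snd y}. \<Sum>b1\<in>{fst y..fst z}. \<Sum>b2\<in>{snd y..snd z}.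
          f a1 (fst y) b1 * g a2 (snd y) b2)"
    by (simp add: sum_atLeastAtMost_prod)
  also have "\<dots> = (\<Sum>a1\<in>{fst x..fst y}. \<Sum>b1\<in>{fst y..fst z}. \<Sum>a2\<in>{snd x..snd y}. \<Sum>b2\<in>{snd y..snd z}.
          f a1 (fst y) b1 * g a2 (snd y) b2)"
    by (intro sum.cong refl sum.swap)
  also have "\<dots> = (\<Sum>a1\<in>{fst x..fst y}. \<Sum>b1\<in>{fst y..fst z}. f a1 (fst y) b1)
                 * (\<Sum>a2\<in>{snd x..snd y}. \<Sum>b2\<in>{snd y..snd z}. g a2 (snd y) b2)"
    unfolding sum_distrib_right unfolding sum_distrib_left ..
  also have "\<dots> = delta3 x y z"
    using f g F1 F2 by (simp add: J_spec_def delta3_prod[of x y z])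
  finally show "(\<Sum>a\<in>{x..y}. \<Sum>b\<in>{y..z}. f (fst a) (fst y) (fst b) * g (snd a) (snd y) (snd b))
      = delta3 x y z" .
qed

theorem proposition5p5:
  fixes x1 y1 z1 :: "'p::order" and x2 y2 z2 :: "'q::order"
  assumes "locally_finite TYPE('p)" and "locally_finite TYPE('q)"
    and "(x1, y1, z1) \<in> Fl3" and "(x2, y2, z2) \<in> Fl3"
  shows "J (x1, x2) (y1, y2) (z1, z2) = J x1 y1 z1 * J x2 y2 z2"
proof -
  have lf: "locally_finite TYPE('p \<times> 'q)"
    using assms(1,2) by (rule locally_finite_prod)
  have spec_product: "J_spec (\<lambda>a y b :: 'p \<times> 'q. J (fst a) (fst y) (fst b) * J (snd a) (snd y) (snd b))"
    using J_spec_J[OF assms(1)] J_spec_J[OF assms(2)] by (rule J_spec_prod)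
  have J_product: "J = (\<lambda>a y b :: 'p \<times> 'q. J (fst a) (fst y) (fst b) * J (snd a) (snd y) (snd b))"
    using J_eq_J_rec[OF lf] J_spec_imp_eq_J_rec[OF lf spec_product] by simp
  show ?thesis
    by (subst J_product) simp
qed

end
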